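(* Let $\Omega\subset\mathbb{R}^d$ be compact, $\omega:\Omega\to[0,\infty)$ integrable, and $\mathcal{F}_K(\Omega)$ a $K$-dimensional space of continuous real functions on $\Omega$ containing the constant function $1$, such that $\langle u,v\rangle=\int_\Omega \omega uv\,\mathrm{d}\boldsymbol{x}$ is an inner product on $\mathcal{F}_K(\Omega)$. Let $(\mathbf{x}_n)_{n\in\mathbb{N}}\subset\Omega$ and, for each $N$, numbers $r_1,\dots,r_N\geq 0$ (possibly depending on $N$) be such that $$\lim_{N\to\infty}\sum_{n=1}^N r_n u(\mathbf{x}_n)v(\mathbf{x}_n)=\int_\Omega\omega(\boldsymbol{x})u(\boldsymbol{x})v(\boldsymbol{x})\,\mathrm{d}\boldsymbol{x}\quad\text{for all } u,v\in\mathcal{F}_K(\Omega),$$ and such that, for all sufficiently large $N$, the set $\{\mathbf{x}_n : 1\le n\le N,\ r_n>0\}$ is $\mathcal{F}_K(\Omega)$-unisolvent. Then there exists $N_0\in\mathbb{N}$ such that for all $N\geq N_0$ the least squares cubature formula $C_N^{\mathrm{LS}}[f]=\sum_{n=1}^N w_n^{\mathrm{LS}}f(\mathbf{x}_n)$ has all weights $w_n^{\mathrm{LS}}\geq 0$.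
   Context: Fix a basis $\varphi_1,\dots,\varphi_K$ of $\mathcal{F}_K(\Omega)$, let $\Phi\in\mathbb{R}^{K\times N}$ with $\Phi_{k,n}=\varphi_k(\mathbf{x}_n)$ and $\mathbf{m}=(m_k)$ with $m_k=\int_\Omega\omega\varphi_k\,\mathrm{d}\boldsymbol{x}$. The LS weights are defined by $\mathbf{w}^{\mathrm{LS}}=\arg\min\{\sum_{n: r_n>0} w_n^2/r_n : \Phi\mathbf{w}=\mathbf{m},\ w_n=0 \text{ whenever } r_n=0\}$ (the minimizer of the weighted Euclidean norm $\|R^{-1/2}\mathbf{w}\|_2$, $R=\mathrm{diag}(r_1,\dots,r_N)$, over the exactness solutions, where $r_n=0$ is interpreted as the constraint $w_n=0$). A point set is $\mathcal{F}_K(\Omega)$-unisolvent if the only $f\in\mathcal{F}_K(\Omega)$ vanishing at all its points is $f\equiv 0$ on $\Omega$. *)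

theory Defs
  imports "HOL-Analysis.Analysis"
begin

definition Fspace :: "'a set \<Rightarrow> (nat \<Rightarrow> 'a \<Rightarrow> real) \<Rightarrow> nat \<Rightarrow> ('a \<Rightarrow> real) set" where
  "Fspace \<Omega> \<phi> K = {f. \<exists>c::nat \<Rightarrow> real. \<forall>y\<in>\<Omega>. f y = (\<Sum>k<K. c k * \<phi> k y)}"

definition unisolvent :: "('a \<Rightarrow> real) set \<Rightarrow> 'a set \<Rightarrow> 'a set \<Rightarrow> bool" where
  "unisolvent F \<Omega> P \<longleftrightarrow> (\<forall>f\<in>F. (\<forall>p\<in>P. f p = 0) \<longrightarrow> (\<forall>y\<in>\<Omega>. f y = 0))"

definition moments :: "'a::euclidean_space set \<Rightarrow> ('a \<Rightarrow> real) \<Rightarrow> (nat \<Rightarrow> 'a \<Rightarrow> real) \<Rightarrow> nat \<Rightarrow> real" where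
  "moments \<Omega> \<omega> \<phi> k = integral \<Omega> (\<lambda>y. \<omega> y * \<phi> k y)"

definition LS_feasible :: "(nat \<Rightarrow> 'a \<Rightarrow> real) \<Rightarrow> nat \<Rightarrow> (nat \<Rightarrow> real) \<Rightarrow> (nat \<Rightarrow> 'a)
    \<Rightarrow> (nat \<Rightarrow> real) \<Rightarrow> nat \<Rightarrow> (nat \<Rightarrow> real) \<Rightarrow> bool" where
  "LS_feasible \<phi> K m x r N w \<longleftrightarrow>
     (\<forall>n. n \<notin> {1..N} \<longrightarrow> w n = 0) \<and>
     (\<forall>n\<in>{1..N}. r n = 0 \<longrightarrow> w n = 0) \<and>
     (\<forall>k<K. (\<Sum>n=1..N. w n * \<phi> k (x n)) = m k)"

definition LS_cost :: "(nat \<Rightarrow> real) \<Rightarrow> nat \<Rightarrow> (nat \<Rightarrow> real) \<Rightarrow> real" where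
  "LS_cost r N w = (\<Sum>n\<in>{n\<in>{1..N}. r n > 0}. (w n)^2 / r n)"

definition LS_weights :: "(nat \<Rightarrow> 'a \<Rightarrow> real) \<Rightarrow> nat \<Rightarrow> (nat \<Rightarrow> real) \<Rightarrow> (nat \<Rightarrow> 'a)
    \<Rightarrow> (nat \<Rightarrow> real) \<Rightarrow> nat \<Rightarrow> nat \<Rightarrow> real" where
  "LS_weights \<phi> K m x r N = (THE w. LS_feasible \<phi> K m x r N w \<and>
       (\<forall>v. LS_feasible \<phi> K m x r N v \<longrightarrow> LS_cost r N w \<le> LS_cost r N v))"

end

theory Submission
  imports Defs "Jordan_Normal_Form.Determinant"
begin

(*
  The least squares weights are w_n = r_n g(x_n) for the g in F_K solving the discrete normal
  equations sum_n r_n g(x_n) phi_j(x_n) = m_j: the cost splits orthogonally around this vector,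
  so it is the unique minimiser. Writing g = 1 + h, the coefficients of h solve a linear system
  whose matrix is the discrete Gram matrix G_N and whose right-hand side is the moment error of
  the rule sum_n r_n f(x_n). As G_N tends to the (positive definite) Gram matrix of the
  continuous inner product, it is uniformly coercive for large N, so h is uniformly small on
  Omega while the moment error tends to zero; hence g > 0 at every node.
  Unisolvency is never invoked: for large N it is itself a consequence of this coercivity.
*)

definition quad_form :: "nat \<Rightarrow> (nat \<Rightarrow> nat \<Rightarrow> real) \<Rightarrow> (nat \<Rightarrow> real) \<Rightarrow> real" where
  "quad_form K A c = (\<Sum>j<K. \<Sum>k<K. c j * c k * A j k)"

lemma quad_form_of_solution:
  assumes "\<forall>j<K. (\<Sum>k<K. A j k * c k) = t j"
  shows "quad_form K A c = (\<Sum>j<K. c j * t j)"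
proof -
  have "quad_form K A c = (\<Sum>j<K. c j * (\<Sum>k<K. A j k * c k))"
    unfolding quad_form_def by (simp add: sum_distrib_left mult_ac)
  also have "\<dots> = (\<Sum>j<K. c j * t j)" using assms by simp
  finally show ?thesis .
qed

lemma quad_form_perturb:
  assumes "\<forall>j<K. \<forall>k<K. \<bar>A j k - B j k\<bar> \<le> \<delta>"
  shows "quad_form K B c - \<delta> * (\<Sum>k<K. \<bar>c k\<bar>)^2 \<le> quad_form K A c"
proof -
  have "(\<Sum>j<K. \<Sum>k<K. - (\<delta> * (\<bar>c j\<bar> * \<bar>c k\<bar>))) \<le> (\<Sum>j<K. \<Sum>k<K. c j * c k * (A j k - B j k))"
  proof (intro sum_mono)
    fix j k assume "j \<in> {..<K}" "k \<in> {..<K}"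
    hence "\<bar>c j * c k * (A j k - B j k)\<bar> \<le> (\<bar>c j\<bar> * \<bar>c k\<bar>) * \<delta>"
      using assms unfolding abs_mult by (intro mult_left_mono) auto
    thus "- (\<delta> * (\<bar>c j\<bar> * \<bar>c k\<bar>)) \<le> c j * c k * (A j k - B j k)"
      by (simp add: abs_le_iff mult_ac)
  qed
  moreover have "(\<Sum>k<K. \<bar>c k\<bar>)^2 = (\<Sum>j<K. \<Sum>k<K. \<bar>c j\<bar> * \<bar>c k\<bar>)"
    by (simp add: power2_eq_square sum_product)
  ultimately show ?thesis
    unfolding quad_form_def by (simp add: sum_negf sum_distrib_left right_diff_distrib sum_subtractf)
qed

lemma compact_l1_unit_sphere:
  "compact {c::nat \<Rightarrow> real. (\<forall>k\<ge>K. c k = 0) \<and> (\<Sum>k<K. \<bar>c k\<bar>) = 1}"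
proof -
  define S where "S k = (if k < K then {-1..1::real} else {0})" for k
  have "compactin (product_topology (\<lambda>_. euclideanreal) UNIV) (PiE UNIV S)"
    by (simp add: compactin_PiE S_def)
  hence "compact (PiE UNIV S)" by (simp add: euclidean_product_topology)
  moreover have "closed {c::nat \<Rightarrow> real. (\<Sum>k<K. \<bar>c k\<bar>) = 1}"
    by (intro closed_Collect_eq continuous_on_sum continuous_on_rabs continuous_on_const
        continuous_on_product_coordinates)
  ultimately have "compact (PiE UNIV S \<inter> {c. (\<Sum>k<K. \<bar>c k\<bar>) = 1})"
    by (rule compact_Int_closed)
  moreover have "\<bar>c k\<bar> \<le> 1" if "(\<Sum>k<K. \<bar>c k\<bar>) = 1" "k < K" for c :: "nat \<Rightarrow> real" and k
    using that member_le_sum[of k "{..<K}" "\<lambda>k. \<bar>c k\<bar>"] by simp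
  hence "PiE UNIV S \<inter> {c. (\<Sum>k<K. \<bar>c k\<bar>) = 1}
           = {c. (\<forall>k\<ge>K. c k = 0) \<and> (\<Sum>k<K. \<bar>c k\<bar>) = 1}"
    unfolding S_def by (force simp: PiE_def Pi_def abs_le_iff)
  ultimately show ?thesis by simp
qed

lemma positive_definite_imp_coercive:
  assumes pos: "\<forall>c. (\<exists>k<K. c k \<noteq> 0) \<longrightarrow> quad_form K A c > 0"
  shows "\<exists>\<mu>>0. \<forall>c. \<mu> * (\<Sum>k<K. \<bar>c k\<bar>)^2 \<le> quad_form K A c"
proof (cases "K = 0")
  case True
  thus ?thesis by (auto simp: quad_form_def intro: exI[of _ 1])
next
  case False
  define T where "T = {c::nat \<Rightarrow> real. (\<forall>k\<ge>K. c k = 0) \<and> (\<Sum>k<K. \<bar>c k\<bar>) = 1}"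
  have "(\<lambda>k. if k = 0 then 1 else 0) \<in> T"
    using False unfolding T_def by auto
  moreover have "continuous_on T (quad_form K A)" unfolding quad_form_def
    by (intro continuous_on_sum continuous_on_mult continuous_on_const
        continuous_on_subset[OF continuous_on_product_coordinates] subset_UNIV)
  ultimately obtain cm where cm: "cm \<in> T" "\<forall>c\<in>T. quad_form K A cm \<le> quad_form K A c"
    using continuous_attains_inf[OF compact_l1_unit_sphere[of K, folded T_def]] by blast
  have "\<exists>k<K. cm k \<noteq> 0"
    using cm(1) unfolding T_def by (auto intro: ccontr)
  hence "quad_form K A cm > 0" using pos by blast
  moreover have "quad_form K A cm * s^2 \<le> quad_form K A c" if s: "s = (\<Sum>k<K. \<bar>c k\<bar>)" "s > 0" for c s
  proof -
    define c' where "c' k = (if k < K then c k / s else 0)" for k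
    have "c' \<in> T"
      using s unfolding T_def c'_def by (simp add: sum_divide_distrib[symmetric])
    hence "quad_form K A cm \<le> quad_form K A c'" using cm by blast
    also have "quad_form K A c' = quad_form K A c / s^2"
      unfolding quad_form_def c'_def by (simp add: sum_divide_distrib power2_eq_square)
    finally show ?thesis using s(2) by (simp add: le_divide_eq)
  qed
  moreover have "quad_form K A c \<ge> 0" if "(\<Sum>k<K. \<bar>c k\<bar>) = 0" for c
    using that by (simp add: quad_form_def sum_nonneg_eq_0_iff)
  ultimately show ?thesis
    by (metis abs_ge_zero order_less_le power_zero_numeral mult_zero_right sum_nonneg)
qed

lemma square_system_solvable:
  fixes A :: "nat \<Rightarrow> nat \<Rightarrow> real"
  assumes inj: "\<forall>c. (\<forall>j<K. (\<Sum>k<K. A j k * c k) = 0) \<longrightarrow> (\<forall>k<K. c k = 0)"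
  shows "\<exists>c. \<forall>j<K. (\<Sum>k<K. A j k * c k) = e j"
proof -
  define M where "M = mat K K (\<lambda>(i,j). A i j)"
  have M: "M \<in> carrier_mat K K" unfolding M_def by auto
  have mv: "(M *\<^sub>v v) $ j = (\<Sum>k<K. A j k * v $ k)" if "v \<in> carrier_vec K" "j < K" for v j
    using that unfolding M_def
    by (auto simp: mult_mat_vec_def scalar_prod_def lessThan_atLeast0 intro!: sum.cong)
  have "det M \<noteq> 0"
  proof
    assume "det M = 0"
    then obtain v where v: "v \<in> carrier_vec K" "v \<noteq> 0\<^sub>v K" "M *\<^sub>v v = 0\<^sub>v K"
      using det_0_iff_vec_prod_zero[OF M] by auto
    have "\<forall>j<K. (\<Sum>k<K. A j k * v $ k) = 0"
      using mv[OF v(1)] v(3) by (metis index_zero_vec(1))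
    with inj have "v = 0\<^sub>v K" using v(1) by (intro eq_vecI) auto
    with v(2) show False by simp
  qed
  then obtain B where B: "B \<in> carrier_mat K K" "M * B = 1\<^sub>m K"
    using det_non_zero_imp_unit[OF M, of "()"] unfolding Units_def ring_mat_def by auto
  define u where "u = B *\<^sub>v vec K e"
  have u: "u \<in> carrier_vec K" unfolding u_def using B by auto
  have "M *\<^sub>v u = vec K e"
    unfolding u_def using B M by (simp add: assoc_mult_mat_vec[symmetric])
  hence "\<forall>j<K. (\<Sum>k<K. A j k * u $ k) = e j"
    using mv[OF u] by (metis index_vec)
  thus ?thesis by blast
qed

lemma coercive_system_solution:
  assumes "\<nu> > 0" and coercive: "\<forall>c. \<nu> * (\<Sum>k<K. \<bar>c k\<bar>)^2 \<le> quad_form K A c"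
  shows "\<exists>c. (\<forall>j<K. (\<Sum>k<K. A j k * c k) = e j) \<and> \<nu> * (\<Sum>k<K. \<bar>c k\<bar>) \<le> (\<Sum>j<K. \<bar>e j\<bar>)"
proof -
  have "\<forall>k<K. c k = 0" if "\<forall>j<K. (\<Sum>k<K. A j k * c k) = 0" for c
  proof -
    have "\<nu> * (\<Sum>k<K. \<bar>c k\<bar>)^2 \<le> 0"
      using coercive[rule_format, of c] quad_form_of_solution[OF that] by simp
    hence "(\<Sum>k<K. \<bar>c k\<bar>) = 0"
      using \<open>\<nu> > 0\<close> by (simp add: mult_le_0_iff)
    thus ?thesis by (simp add: sum_nonneg_eq_0_iff)
  qed
  then obtain c where c: "\<forall>j<K. (\<Sum>k<K. A j k * c k) = e j"
    using square_system_solvable by blast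
  define s where "s = (\<Sum>k<K. \<bar>c k\<bar>)"
  have "\<nu> * s^2 \<le> (\<Sum>j<K. c j * e j)"
    using coercive[rule_format, of c] quad_form_of_solution[OF c] unfolding s_def by simp
  also have "\<dots> \<le> (\<Sum>j<K. \<bar>c j\<bar> * (\<Sum>j<K. \<bar>e j\<bar>))"
  proof (intro sum_mono)
    fix j assume "j \<in> {..<K}"
    hence "\<bar>e j\<bar> \<le> (\<Sum>j<K. \<bar>e j\<bar>)" by (intro member_le_sum) auto
    hence "\<bar>c j * e j\<bar> \<le> \<bar>c j\<bar> * (\<Sum>j<K. \<bar>e j\<bar>)"
      unfolding abs_mult by (intro mult_left_mono) auto
    thus "c j * e j \<le> \<bar>c j\<bar> * (\<Sum>j<K. \<bar>e j\<bar>)" by simp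
  qed
  also have "\<dots> = s * (\<Sum>j<K. \<bar>e j\<bar>)" unfolding s_def by (simp add: sum_distrib_right)
  finally have "\<nu> * s * s \<le> s * (\<Sum>j<K. \<bar>e j\<bar>)" by (simp add: power2_eq_square mult_ac)
  moreover have "s \<ge> 0" unfolding s_def by (simp add: sum_nonneg)
  ultimately have "\<nu> * s \<le> (\<Sum>j<K. \<bar>e j\<bar>)"
    using \<open>\<nu> > 0\<close> \<open>s \<ge> 0\<close> by (cases "s = 0") (auto simp: sum_nonneg)
  with c show ?thesis unfolding s_def by blast
qed

lemma eventually_small_solutions:
  fixes A :: "nat \<Rightarrow> nat \<Rightarrow> nat \<Rightarrow> real" and e :: "nat \<Rightarrow> nat \<Rightarrow> real"
  assumes lim: "\<forall>j<K. \<forall>k<K. (\<lambda>N. A N j k) \<longlonglongrightarrow> L j k"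
    and pos: "\<forall>c. (\<exists>k<K. c k \<noteq> 0) \<longrightarrow> quad_form K L c > 0"
    and rhs: "\<forall>j<K. (\<lambda>N. e N j) \<longlonglongrightarrow> 0"
    and "\<epsilon> > 0"
  shows "eventually (\<lambda>N. \<exists>c. (\<forall>j<K. (\<Sum>k<K. A N j k * c k) = e N j) \<and> (\<Sum>k<K. \<bar>c k\<bar>) < \<epsilon>)
           sequentially"
proof -
  obtain \<mu> where \<mu>: "\<mu> > 0" "\<forall>c. \<mu> * (\<Sum>k<K. \<bar>c k\<bar>)^2 \<le> quad_form K L c"
    using positive_definite_imp_coercive[OF pos] by blast
  have "eventually (\<lambda>N. \<forall>j\<in>{..<K}. \<forall>k\<in>{..<K}. dist (A N j k) (L j k) < \<mu>/2) sequentially"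
    using lim \<mu>(1) by (intro eventually_ball_finite ballI tendstoD) auto
  moreover have "((\<lambda>N. \<Sum>j<K. \<bar>e N j\<bar>) \<longlongrightarrow> 0) sequentially"
    using tendsto_sum[of "{..<K}" "\<lambda>j N. \<bar>e N j\<bar>" "\<lambda>_. 0"] rhs by (simp add: tendsto_rabs_zero)
  hence "eventually (\<lambda>N. (\<Sum>j<K. \<bar>e N j\<bar>) < \<mu>/2 * \<epsilon>) sequentially"
    using \<mu>(1) \<open>\<epsilon> > 0\<close> by (intro order_tendstoD(2)) auto
  ultimately show ?thesis
  proof eventually_elim
    case (elim N)
    have "\<forall>c. \<mu>/2 * (\<Sum>k<K. \<bar>c k\<bar>)^2 \<le> quad_form K (A N) c"
    proof
      fix c
      have "quad_form K L c - \<mu>/2 * (\<Sum>k<K. \<bar>c k\<bar>)^2 \<le> quad_form K (A N) c"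
        using elim(1) by (intro quad_form_perturb) (auto simp: dist_real_def less_imp_le)
      thus "\<mu>/2 * (\<Sum>k<K. \<bar>c k\<bar>)^2 \<le> quad_form K (A N) c"
        using \<mu>(2)[rule_format, of c] by simp
    qed
    then obtain c where "\<forall>j<K. (\<Sum>k<K. A N j k * c k) = e N j"
        "\<mu>/2 * (\<Sum>k<K. \<bar>c k\<bar>) \<le> (\<Sum>j<K. \<bar>e N j\<bar>)"
      using coercive_system_solution[of "\<mu>/2" K "A N" "e N"] \<mu>(1) by auto
    moreover have "\<mu>/2 * (\<Sum>k<K. \<bar>c k\<bar>) < \<mu>/2 * \<epsilon>"
      using calculation(2) elim(2) by linarith
    hence "(\<Sum>k<K. \<bar>c k\<bar>) < \<epsilon>"
      using \<mu>(1) by simp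
    ultimately show ?case by blast
  qed
qed

lemma LS_weights_eqI:
  assumes "LS_feasible \<phi> K m x r N w"
    and "\<And>v. LS_feasible \<phi> K m x r N v \<Longrightarrow> v \<noteq> w \<Longrightarrow> LS_cost r N w < LS_cost r N v"
  shows "LS_weights \<phi> K m x r N = w"
  unfolding LS_weights_def
  by (rule the_equality) (use assms in \<open>fastforce, metis not_less order_refl\<close>)

lemma LS_cost_orthogonal_split:
  assumes r_nonneg: "\<forall>n\<in>{1..N}. r n \<ge> 0"
    and w: "w = (\<lambda>n. if n \<in> {1..N} then r n * g (x n) else 0)"
    and g: "\<forall>n\<in>{1..N}. g (x n) = (\<Sum>k<K. b k * \<phi> k (x n))"
    and feas_w: "LS_feasible \<phi> K m x r N w" and feas_v: "LS_feasible \<phi> K m x r N v"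
  shows "LS_cost r N v = LS_cost r N w + (\<Sum>n\<in>{n\<in>{1..N}. r n > 0}. (v n - w n)^2 / r n)"
proof -
  define S where "S = {n\<in>{1..N}. r n > 0}"
  define d where "d = (\<lambda>n. v n - w n)"
  have d_outside: "d n = 0" if "n \<in> {1..N}" "n \<notin> S" for n
  proof -
    have "r n = 0" using that r_nonneg unfolding S_def by force
    thus ?thesis using that feas_v unfolding d_def w LS_feasible_def by auto
  qed
  have d_exact: "(\<Sum>n=1..N. d n * \<phi> k (x n)) = 0" if "k < K" for k
    using feas_v feas_w that unfolding d_def LS_feasible_def
    by (simp add: left_diff_distrib sum_subtractf)
  have "(\<Sum>n\<in>S. w n * d n / r n) = (\<Sum>n\<in>S. g (x n) * d n)"
    unfolding w S_def by (intro sum.cong) auto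
  also have "\<dots> = (\<Sum>n=1..N. g (x n) * d n)"
    by (rule sum.mono_neutral_left) (auto simp: S_def d_outside)
  also have "\<dots> = (\<Sum>k<K. b k * (\<Sum>n=1..N. d n * \<phi> k (x n)))"
    using g by (simp add: sum_distrib_left sum_distrib_right sum.swap[of _ _ "{..<K}"] mult_ac)
  also have "\<dots> = 0" using d_exact by simp
  finally have cross: "(\<Sum>n\<in>S. w n * d n / r n) = 0" .
  have "LS_cost r N v = (\<Sum>n\<in>S. (w n)^2 / r n + 2 * (w n * d n / r n) + (d n)^2 / r n)"
    unfolding LS_cost_def S_def[symmetric] d_def
    by (intro sum.cong) (auto simp: S_def power2_eq_square field_simps)
  also have "\<dots> = LS_cost r N w + (\<Sum>n\<in>S. (d n)^2 / r n)"
    unfolding LS_cost_def S_def[symmetric] using cross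
    by (simp add: sum.distrib sum_distrib_left[symmetric] times_divide_eq_right[symmetric] del: times_divide_eq_right)
  finally show ?thesis unfolding S_def d_def .
qed

lemma LS_weights_normal_equations:
  assumes r_nonneg: "\<forall>n\<in>{1..N}. r n \<ge> 0"
    and g: "\<forall>n\<in>{1..N}. g (x n) = (\<Sum>k<K. b k * \<phi> k (x n))"
    and normal: "\<forall>k<K. (\<Sum>n=1..N. r n * g (x n) * \<phi> k (x n)) = m k"
  shows "LS_weights \<phi> K m x r N = (\<lambda>n. if n \<in> {1..N} then r n * g (x n) else 0)"
proof -
  define w where "w = (\<lambda>n. if n \<in> {1..N} then r n * g (x n) else 0)"
  have feas_w: "LS_feasible \<phi> K m x r N w"
    using normal unfolding LS_feasible_def w_def by (auto intro: trans[OF sum.cong])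
  show ?thesis
    unfolding w_def[symmetric]
  proof (rule LS_weights_eqI[OF feas_w])
    fix v assume feas_v: "LS_feasible \<phi> K m x r N v" and "v \<noteq> w"
    then obtain i where "v i \<noteq> w i" by blast
    moreover from this have "i \<in> {1..N}" "r i \<noteq> 0"
      using feas_v unfolding LS_feasible_def w_def by (auto split: if_splits)
    ultimately have "0 < (\<Sum>n\<in>{n\<in>{1..N}. r n > 0}. (v n - w n)^2 / r n)"
      using r_nonneg by (intro sum_pos2[where i = i]) force+
    thus "LS_cost r N w < LS_cost r N v"
      using LS_cost_orthogonal_split[OF r_nonneg w_def g feas_w feas_v] by simp
  qed
qed

lemma LS_weights_nonneg_if_small_correction:
  assumes r_nonneg: "\<forall>n\<in>{1..N}. r n \<ge> 0"
    and one: "\<forall>n\<in>{1..N}. (\<Sum>k<K. a k * \<phi> k (x n)) = 1"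
    and bound: "\<forall>n\<in>{1..N}. \<forall>k<K. \<bar>\<phi> k (x n)\<bar> \<le> B"
    and small: "(\<Sum>k<K. \<bar>c k\<bar>) * B < 1"
    and correction: "\<forall>j<K. (\<Sum>k<K. (\<Sum>n=1..N. r n * \<phi> j (x n) * \<phi> k (x n)) * c k)
                              = m j - (\<Sum>n=1..N. r n * \<phi> j (x n))"
  shows "\<forall>n\<in>{1..N}. LS_weights \<phi> K m x r N n \<ge> 0"
proof -
  define g where "g y = (\<Sum>k<K. (a k + c k) * \<phi> k y)" for y
  have g_eq: "g (x n) = 1 + (\<Sum>k<K. c k * \<phi> k (x n))" if "n \<in> {1..N}" for n
    using one that unfolding g_def by (simp add: distrib_right sum.distrib)
  have g_pos: "g (x n) > 0" if n: "n \<in> {1..N}" for n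
  proof -
    have "\<bar>\<Sum>k<K. c k * \<phi> k (x n)\<bar> \<le> (\<Sum>k<K. \<bar>c k\<bar> * B)"
      using bound n by (intro order.trans[OF sum_abs] sum_mono) (auto simp: abs_mult intro: mult_left_mono)
    thus ?thesis using g_eq[OF n] small by (simp add: sum_distrib_right)
  qed
  have "(\<Sum>n=1..N. r n * g (x n) * \<phi> j (x n)) = m j" if "j < K" for j
  proof -
    have "(\<Sum>n=1..N. r n * g (x n) * \<phi> j (x n))
        = (\<Sum>n=1..N. r n * \<phi> j (x n)) + (\<Sum>n=1..N. \<Sum>k<K. r n * \<phi> j (x n) * \<phi> k (x n) * c k)"
      by (simp add: g_eq sum.distrib[symmetric] distrib_left distrib_right sum_distrib_left mult_ac)
    also have "(\<Sum>n=1..N. \<Sum>k<K. r n * \<phi> j (x n) * \<phi> k (x n) * c k)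
        = (\<Sum>k<K. (\<Sum>n=1..N. r n * \<phi> j (x n) * \<phi> k (x n)) * c k)"
      by (subst sum.swap) (simp add: sum_distrib_right)
    finally show ?thesis using correction that by simp
  qed
  hence "LS_weights \<phi> K m x r N = (\<lambda>n. if n \<in> {1..N} then r n * g (x n) else 0)"
    using r_nonneg by (intro LS_weights_normal_equations[where b = "\<lambda>k. a k + c k"]) (auto simp: g_def)
  thus ?thesis using r_nonneg g_pos by (simp add: less_imp_le)
qed

lemma basis_in_Fspace:
  fixes \<phi> :: "nat \<Rightarrow> 'a \<Rightarrow> real"
  assumes "j < K"
  shows "\<phi> j \<in> Fspace \<Omega> \<phi> K"
proof -
  have "(\<Sum>k<K. (if k = j then 1 else 0) * \<phi> k y) = (\<Sum>k<K. if k = j then \<phi> k y else 0)" for y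
    by (intro sum.cong) auto
  hence "\<phi> j y = (\<Sum>k<K. (if k = j then 1 else 0) * \<phi> k y)" for y
    using assms by simp
  thus ?thesis unfolding Fspace_def by (intro CollectI exI[of _ "\<lambda>k. if k = j then 1 else 0"]) blast
qed

lemma continuous_basis_bounded:
  fixes \<phi> :: "nat \<Rightarrow> 'a::topological_space \<Rightarrow> real"
  assumes "compact \<Omega>" and "\<forall>k<K. continuous_on \<Omega> (\<phi> k)"
  shows "\<exists>B>0. \<forall>k<K. \<forall>y\<in>\<Omega>. \<bar>\<phi> k y\<bar> \<le> B"
proof -
  have "continuous_on \<Omega> (\<lambda>y. \<Sum>k<K. \<bar>\<phi> k y\<bar>)"
    using assms(2) by (intro continuous_on_sum continuous_on_rabs) auto
  hence "bounded ((\<lambda>y. \<Sum>k<K. \<bar>\<phi> k y\<bar>) ` \<Omega>)"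
    using assms(1) by (intro compact_imp_bounded compact_continuous_image)
  then obtain B where "B > 0" and B: "\<forall>y\<in>\<Omega>. \<bar>\<Sum>k<K. \<bar>\<phi> k y\<bar>\<bar> \<le> B"
    unfolding bounded_pos by auto
  moreover have "\<bar>\<phi> k y\<bar> \<le> B" if "k < K" "y \<in> \<Omega>" for k y
  proof -
    have "\<bar>\<phi> k y\<bar> \<le> (\<Sum>k<K. \<bar>\<phi> k y\<bar>)"
      using that by (intro member_le_sum) auto
    also have "\<dots> \<le> B"
      using B that by (simp add: sum_nonneg)
    finally show ?thesis .
  qed
  ultimately show ?thesis by blast
qed

lemma weighted_gram_quad_form:
  "quad_form K (\<lambda>j k. \<Sum>n\<in>I. \<rho> n * \<phi> j (p n) * \<phi> k (p n)) c
     = (\<Sum>n\<in>I. \<rho> n * (\<Sum>k<K. c k * \<phi> k (p n)) * (\<Sum>k<K. c k * \<phi> k (p n)))"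
proof -
  have "(\<Sum>n\<in>I. \<rho> n * (\<Sum>k<K. c k * \<phi> k (p n)) * (\<Sum>k<K. c k * \<phi> k (p n)))
      = (\<Sum>n\<in>I. \<Sum>j<K. \<Sum>k<K. c j * c k * (\<rho> n * \<phi> j (p n) * \<phi> k (p n)))"
    by (simp add: sum_product sum_distrib_left mult_ac)
  also have "\<dots> = (\<Sum>j<K. \<Sum>n\<in>I. \<Sum>k<K. c j * c k * (\<rho> n * \<phi> j (p n) * \<phi> k (p n)))"
    by (rule sum.swap)
  also have "\<dots> = (\<Sum>j<K. \<Sum>k<K. \<Sum>n\<in>I. c j * c k * (\<rho> n * \<phi> j (p n) * \<phi> k (p n)))"
    by (rule sum.cong[OF refl], rule sum.swap)
  finally show ?thesis
    unfolding quad_form_def by (simp add: sum_distrib_left)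
qed

lemma discrete_gram_tendsto:
  assumes conv: "\<forall>u\<in>Fspace \<Omega> \<phi> K. \<forall>v\<in>Fspace \<Omega> \<phi> K.
                 (\<lambda>N. \<Sum>n=1..N. r N n * u (x n) * v (x n))
                   \<longlonglongrightarrow> integral \<Omega> (\<lambda>y. \<omega> y * u y * v y)"
  shows "\<forall>j<K. \<forall>k<K. (\<lambda>N. \<Sum>n=1..N. r N n * \<phi> j (x n) * \<phi> k (x n))
                        \<longlonglongrightarrow> integral \<Omega> (\<lambda>y. \<omega> y * \<phi> j y * \<phi> k y)"
  using conv basis_in_Fspace by blast

lemma integral_gram_positive_definite:
  assumes indep: "\<forall>c::nat \<Rightarrow> real. (\<forall>y\<in>\<Omega>. (\<Sum>k<K. c k * \<phi> k y) = 0) \<longrightarrow> (\<forall>k<K. c k = 0)"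
    and inner: "\<forall>f\<in>Fspace \<Omega> \<phi> K. (\<exists>y\<in>\<Omega>. f y \<noteq> 0) \<longrightarrow>
                  integral \<Omega> (\<lambda>y. \<omega> y * f y * f y) > 0"
    and conv: "\<forall>u\<in>Fspace \<Omega> \<phi> K. \<forall>v\<in>Fspace \<Omega> \<phi> K.
                 (\<lambda>N. \<Sum>n=1..N. r N n * u (x n) * v (x n))
                   \<longlonglongrightarrow> integral \<Omega> (\<lambda>y. \<omega> y * u y * v y)"
  shows "\<forall>c. (\<exists>k<K. c k \<noteq> 0) \<longrightarrow>
           quad_form K (\<lambda>j k. integral \<Omega> (\<lambda>y. \<omega> y * \<phi> j y * \<phi> k y)) c > 0"
proof (intro allI impI)
  fix c :: "nat \<Rightarrow> real" assume "\<exists>k<K. c k \<noteq> 0"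
  define f where "f y = (\<Sum>k<K. c k * \<phi> k y)" for y
  have f: "f \<in> Fspace \<Omega> \<phi> K" unfolding f_def Fspace_def by blast
  let ?G = "\<lambda>N j k. \<Sum>n=1..N. r N n * \<phi> j (x n) * \<phi> k (x n)"
  have "(\<lambda>N. quad_form K (?G N) c)
          \<longlonglongrightarrow> quad_form K (\<lambda>j k. integral \<Omega> (\<lambda>y. \<omega> y * \<phi> j y * \<phi> k y)) c"
    unfolding quad_form_def using discrete_gram_tendsto[OF conv]
    by (intro tendsto_sum tendsto_mult tendsto_const) auto
  moreover have "(\<lambda>N. quad_form K (?G N) c) \<longlonglongrightarrow> integral \<Omega> (\<lambda>y. \<omega> y * f y * f y)"
    unfolding weighted_gram_quad_form f_def[symmetric] using conv f by blast
  ultimately have "quad_form K (\<lambda>j k. integral \<Omega> (\<lambda>y. \<omega> y * \<phi> j y * \<phi> k y)) c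
                     = integral \<Omega> (\<lambda>y. \<omega> y * f y * f y)"
    by (rule LIMSEQ_unique)
  moreover have "\<exists>y\<in>\<Omega>. f y \<noteq> 0"
    using indep \<open>\<exists>k<K. c k \<noteq> 0\<close> unfolding f_def by blast
  ultimately show "quad_form K (\<lambda>j k. integral \<Omega> (\<lambda>y. \<omega> y * \<phi> j y * \<phi> k y)) c > 0"
    using inner f by simp
qed

theorem mainTheorem5:
  fixes \<Omega> :: "'a::euclidean_space set"
    and \<omega> :: "'a \<Rightarrow> real"
    and \<phi> :: "nat \<Rightarrow> 'a \<Rightarrow> real"
    and K :: nat
    and x :: "nat \<Rightarrow> 'a"
    and r :: "nat \<Rightarrow> nat \<Rightarrow> real"
  assumes cpt: "compact \<Omega>"
    and \<omega>_nonneg: "\<forall>y\<in>\<Omega>. \<omega> y \<ge> 0"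
    and \<omega>_int: "\<omega> integrable_on \<Omega>"
    and cont: "\<forall>k<K. continuous_on \<Omega> (\<phi> k)"
    and indep: "\<forall>c::nat \<Rightarrow> real. (\<forall>y\<in>\<Omega>. (\<Sum>k<K. c k * \<phi> k y) = 0) \<longrightarrow> (\<forall>k<K. c k = 0)"
    and const: "(\<lambda>y. 1) \<in> Fspace \<Omega> \<phi> K"
    and inner: "\<forall>f\<in>Fspace \<Omega> \<phi> K. (\<exists>y\<in>\<Omega>. f y \<noteq> 0) \<longrightarrow>
                  integral \<Omega> (\<lambda>y. \<omega> y * f y * f y) > 0"
    and pts: "\<forall>n. x n \<in> \<Omega>"
    and r_nonneg: "\<forall>N. \<forall>n\<in>{1..N}. r N n \<ge> 0"
    and conv: "\<forall>u\<in>Fspace \<Omega> \<phi> K. \<forall>v\<in>Fspace \<Omega> \<phi> K.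
                 (\<lambda>N. \<Sum>n=1..N. r N n * u (x n) * v (x n))
                   \<longlonglongrightarrow> integral \<Omega> (\<lambda>y. \<omega> y * u y * v y)"
    and unisolv: "\<exists>M. \<forall>N\<ge>M. unisolvent (Fspace \<Omega> \<phi> K) \<Omega> {x n | n. n \<in> {1..N} \<and> r N n > 0}"
  shows "\<exists>N0. \<forall>N\<ge>N0. \<forall>n\<in>{1..N}.
           LS_weights \<phi> K (moments \<Omega> \<omega> \<phi>) x (r N) N n \<ge> 0"
proof -
  obtain a where a: "\<forall>y\<in>\<Omega>. (\<Sum>k<K. a k * \<phi> k y) = 1"
    using const unfolding Fspace_def by force
  obtain B where B: "B > 0" "\<forall>k<K. \<forall>y\<in>\<Omega>. \<bar>\<phi> k y\<bar> \<le> B"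
    using continuous_basis_bounded[OF cpt cont] by blast
  define G where "G N j k = (\<Sum>n=1..N. r N n * \<phi> j (x n) * \<phi> k (x n))" for N j k
  define e where "e N j = moments \<Omega> \<omega> \<phi> j - (\<Sum>n=1..N. r N n * \<phi> j (x n))" for N j
  have "\<forall>j<K. (\<lambda>N. e N j) \<longlonglongrightarrow> 0"
  proof (intro allI impI)
    fix j assume "j < K"
    have "(\<lambda>N. \<Sum>n=1..N. r N n * \<phi> j (x n)) \<longlonglongrightarrow> moments \<Omega> \<omega> \<phi> j"
      using conv[rule_format, OF const basis_in_Fspace[OF \<open>j < K\<close>]] by (simp add: moments_def)
    from tendsto_diff[OF tendsto_const[of "moments \<Omega> \<omega> \<phi> j"] this] show "(\<lambda>N. e N j) \<longlonglongrightarrow> 0"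
      unfolding e_def by simp
  qed
  hence "eventually (\<lambda>N. \<exists>c. (\<forall>j<K. (\<Sum>k<K. G N j k * c k) = e N j) \<and> (\<Sum>k<K. \<bar>c k\<bar>) < 1 / B)
           sequentially"
    using eventually_small_solutions[OF discrete_gram_tendsto[OF conv]
        integral_gram_positive_definite[OF indep inner conv], of e "1 / B"] B(1)
    unfolding G_def by simp
  moreover have "\<forall>n\<in>{1..N}. LS_weights \<phi> K (moments \<Omega> \<omega> \<phi>) x (r N) N n \<ge> 0"
    if "\<forall>j<K. (\<Sum>k<K. G N j k * c k) = e N j" and "(\<Sum>k<K. \<bar>c k\<bar>) < 1 / B" for N c
    using that a B pts r_nonneg
    by (intro LS_weights_nonneg_if_small_correction[where a = a and B = B and c = c])
      (auto simp: G_def e_def pos_less_divide_eq)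
  ultimately show ?thesis
    unfolding eventually_sequentially by blast
qed

end
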